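(* Let $k\ge1$ be fixed and consider the asymptotic regime $n\to\infty$. For $1\le i,j\le n$ let $\mathsf d_{i,j,\mathrm{noisy}}\ge0$ and $\mathsf d_{i,j,\mathrm{clean}}\ge0$ be scalar dissimilarities (possibly random), and suppose there exist $\xi_n\in\mathbb R$ with $$\sup_{i\ne j}\big|\mathsf d^2_{i,j,\mathrm{noisy}}-\mathsf d^2_{i,j,\mathrm{clean}}-\xi_n\big|=o_P(1).$$ For a fixed $\nu>0$ set $\tilde w_{i,j}=\exp(-\mathsf d^2_{i,j,\mathrm{noisy}}/\nu)$, $w_{i,j}=\exp(-\mathsf d^2_{i,j,\mathrm{clean}}/\nu)$, $W=(w_{i,j})$, $\widetilde W=(\tilde w_{i,j})$. Let $G,\widetilde G$ be $nk\times nk$ block matrices with $k\times k$ blocks $G_{i,j},\widetilde G_{i,j}$ (connections between clean, resp. noisy, versions of objects $i$ and $j$). Suppose that there is a constant $C>0$ with $\sup_{i,j}\|G_{i,j}\|_F\le C$, $\sup_{i,j}\|\widetilde G_{i,j}\|_F\le C$, that $\sup_{i,j}\|\widetilde G_{i,j}-G_{i,j}\|_F=o_P(1)$, and that $\inf_i\frac1n\sum_{j\ne i}w_{i,j}>\gamma$ with $\gamma$ bounded below by a positive constant as $n\to\infty$. Then $$\|L(W,G)-L_0(\widetilde W,\widetilde G)\|_{op}=o_P(1).$$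
   Context: For an $n\times n$ matrix $W$ and an $nk\times nk$ block matrix $G$, $S$ is the block matrix with blocks $w_{i,j}G_{i,j}$, $D$ is block diagonal with blocks $(\sum_{j\ne i}w_{i,j})\mathrm I_k$, $L(W,G)=D^{-1}S$, and $L_0(W,G)=L(W\circ1_{i\ne j},G)$, i.e. computed after setting the diagonal weights to $0$. $o_P(1)$ denotes convergence to $0$ in probability as $n\to\infty$. *)

theory Defs
  imports "HOL-Probability.Probability"
begin

text \<open>Block matrices: an nk x nk matrix is represented (for a given n) by its
  k x k blocks B i j, for i, j < n; the block dimension k is the cardinality of
  the finite index type 'k. Values of B outside i, j < n are irrelevant.\<close>

definition frob :: "real^'k^'k \<Rightarrow> real" where
  "frob A = sqrt (\<Sum>i\<in>UNIV. \<Sum>j\<in>UNIV. (A $ i $ j)\<^sup>2)"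

definition bvec_norm :: "nat \<Rightarrow> (nat \<Rightarrow> real^'k) \<Rightarrow> real" where
  "bvec_norm n x = sqrt (\<Sum>i<n. (norm (x i))\<^sup>2)"

definition bmat_apply :: "nat \<Rightarrow> (nat \<Rightarrow> nat \<Rightarrow> real^'k^'k) \<Rightarrow> (nat \<Rightarrow> real^'k) \<Rightarrow> (nat \<Rightarrow> real^'k)" where
  "bmat_apply n B x = (\<lambda>i. \<Sum>j<n. B i j *v x j)"

definition op_norm :: "nat \<Rightarrow> (nat \<Rightarrow> nat \<Rightarrow> real^'k^'k) \<Rightarrow> real" where
  "op_norm n B = (SUP x\<in>{x. bvec_norm n x \<le> 1}. bvec_norm n (bmat_apply n B x))"

text \<open>L(W,G) = D^{-1} S, blocks w_ij G_ij / (sum_{l \<noteq> i} w_il).\<close>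
definition Lmat :: "nat \<Rightarrow> (nat \<Rightarrow> nat \<Rightarrow> real) \<Rightarrow> (nat \<Rightarrow> nat \<Rightarrow> real^'k^'k) \<Rightarrow> nat \<Rightarrow> nat \<Rightarrow> real^'k^'k" where
  "Lmat n W G i j = (W i j / (\<Sum>l\<in>{..<n} - {i}. W i l)) *\<^sub>R G i j"

definition L0mat :: "nat \<Rightarrow> (nat \<Rightarrow> nat \<Rightarrow> real) \<Rightarrow> (nat \<Rightarrow> nat \<Rightarrow> real^'k^'k) \<Rightarrow> nat \<Rightarrow> nat \<Rightarrow> real^'k^'k" where
  "L0mat n W G = Lmat n (\<lambda>i j. if i = j then 0 else W i j) G"

text \<open>o_P(1): convergence to 0 in (outer) probability, n \<rightarrow> \<infinity>. Formulated with
  measurable covering events, so that no measurability of X n is presupposed;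
  for measurable X n it is ordinary convergence in probability.\<close>
definition oP1 :: "'a measure \<Rightarrow> (nat \<Rightarrow> 'a \<Rightarrow> real) \<Rightarrow> bool" where
  "oP1 M X \<longleftrightarrow> (\<forall>\<epsilon>>0. \<forall>\<delta>>0. eventually (\<lambda>n. \<exists>A\<in>sets M.
      measure M A < \<delta> \<and> {\<omega>\<in>space M. \<epsilon> < \<bar>X n \<omega>\<bar>} \<subseteq> A) sequentially)"

end

theory Submission
  imports Defs
begin

text \<open>Off the diagonal, the noisy Gaussian weight is the clean one times the common factor
  \<open>exp (-\<xi>\<^sub>n/\<nu>)\<close> and a factor \<open>r\<close> in \<open>[1/R, R]\<close>, \<open>R = exp (t/\<nu>)\<close>, where \<open>t\<close> bounds the
  deviations of the squared dissimilarities and of the connections. The common factor cancels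
  under row normalisation, so every normalised weight moves by at most \<open>(R\<^sup>2 - 1)\<close> times itself,
  and the row sums exceed \<open>n\<gamma>\<close>; hence each off-diagonal block of \<open>L - L\<^sub>0\<close> has Frobenius norm
  \<open>O(((R\<^sup>2 - 1) C + R\<^sup>2 t)/(n\<gamma>))\<close>, while the diagonal blocks of \<open>L\<close>, absent from \<open>L\<^sub>0\<close>, are
  \<open>O(C/(n\<gamma>))\<close>. Bounding the operator norm by the Hilbert-Schmidt norm gives
  \<open>((R\<^sup>2 - 1) C + R\<^sup>2 t)/\<gamma>\<close> plus a term vanishing like \<open>1/\<surd>n\<close>; this is small as soon as
  \<open>t\<close> is small and \<open>n\<close> large, which happens with probability tending to one.\<close>

lemma frob_eq_norm: "frob A = norm A"
  by (simp add: frob_def norm_vec_def L2_set_def sum_nonneg)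

lemma norm_matrix_vector_le: "norm (A *v v) \<le> norm A * norm (v::real^'k)"
proof -
  have row: "\<bar>(A *v v) $ i\<bar> \<le> norm (A $ i) * norm v" for i
  proof -
    have "(A *v v) $ i = A $ i \<bullet> v" by (simp add: matrix_vector_mult_def inner_vec_def)
    then show ?thesis by (simp add: Cauchy_Schwarz_ineq2)
  qed
  have "norm (A *v v) = L2_set (\<lambda>i. \<bar>(A *v v) $ i\<bar>) UNIV" by (simp add: norm_vec_def L2_set_def)
  also have "\<dots> \<le> L2_set (\<lambda>i. norm (A $ i) * norm v) UNIV"
    by (rule L2_set_mono) (use row in auto)
  also have "\<dots> = norm A * norm v"
    by (simp add: L2_set_left_distrib norm_vec_def)
  finally show ?thesis .
qed

lemma bvec_norm_bmat_apply_le: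
  "bvec_norm n (bmat_apply n B x) \<le> sqrt (\<Sum>i<n. \<Sum>j<n. (frob (B i j))\<^sup>2) * bvec_norm n x"
proof -
  have row: "norm (bmat_apply n B x i) \<le> L2_set (\<lambda>j. norm (B i j)) {..<n} * bvec_norm n x" for i
  proof -
    have "norm (bmat_apply n B x i) \<le> (\<Sum>j<n. \<bar>norm (B i j)\<bar> * \<bar>norm (x j)\<bar>)"
      unfolding bmat_apply_def
      by (rule order_trans[OF norm_sum sum_mono]) (simp add: norm_matrix_vector_le)
    also have "\<dots> \<le> L2_set (\<lambda>j. norm (B i j)) {..<n} * L2_set (\<lambda>j. norm (x j)) {..<n}"
      by (rule L2_set_mult_ineq)
    finally show ?thesis by (simp add: bvec_norm_def L2_set_def)
  qed
  have "bvec_norm n (bmat_apply n B x) = L2_set (\<lambda>i. norm (bmat_apply n B x i)) {..<n}"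
    by (simp add: bvec_norm_def L2_set_def)
  also have "\<dots> \<le> L2_set (\<lambda>i. L2_set (\<lambda>j. norm (B i j)) {..<n} * bvec_norm n x) {..<n}"
    by (rule L2_set_mono) (use row in auto)
  also have "\<dots> = sqrt (\<Sum>i<n. \<Sum>j<n. (frob (B i j))\<^sup>2) * bvec_norm n x"
    by (simp add: L2_set_def bvec_norm_def frob_eq_norm sum_nonneg power_mult_distrib
        sum_distrib_right[symmetric] real_sqrt_mult)
  finally show ?thesis .
qed

lemma abs_op_norm_le_hilbert_schmidt:
  "\<bar>op_norm n B\<bar> \<le> sqrt (\<Sum>i<n. \<Sum>j<n. (frob (B i j))\<^sup>2)"
proof -
  let ?HS = "sqrt (\<Sum>i<n. \<Sum>j<n. (frob (B i j))\<^sup>2)"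
  let ?ball = "{x. bvec_norm n x \<le> 1}"
  have HS_nonneg: "0 \<le> ?HS" by (simp add: sum_nonneg)
  have bound: "bvec_norm n (bmat_apply n B x) \<le> ?HS" if "x \<in> ?ball" for x
    using bvec_norm_bmat_apply_le[of n B x] mult_left_mono[of "bvec_norm n x" 1 ?HS] that HS_nonneg
    by auto
  have zero: "(\<lambda>_. 0) \<in> ?ball" by (simp add: bvec_norm_def)
  have "op_norm n B \<le> ?HS"
    unfolding op_norm_def using zero bound by (intro cSUP_least) auto
  moreover have "0 \<le> op_norm n B"
  proof -
    have "0 \<le> bvec_norm n (bmat_apply n B (\<lambda>_. 0))" by (simp add: bvec_norm_def sum_nonneg)
    also have "\<dots> \<le> op_norm n B"
      unfolding op_norm_def using zero bound by (intro cSUP_upper bdd_aboveI2) auto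
    finally show ?thesis .
  qed
  ultimately show ?thesis by simp
qed

lemma normalized_weight_perturbation:
  fixes w r :: "'b \<Rightarrow> real"
  assumes "finite S" "j \<in> S" "0 < R"
    and w_nonneg: "\<forall>l\<in>S. 0 \<le> w l" and "0 < sum w S"
    and r_between: "\<forall>l\<in>S. 1 / R \<le> r l \<and> r l \<le> R"
  shows "w j / sum w S / R\<^sup>2 \<le> w j * r j / (\<Sum>l\<in>S. w l * r l)"
    and "w j * r j / (\<Sum>l\<in>S. w l * r l) \<le> R\<^sup>2 * (w j / sum w S)"
    and "\<bar>w j / sum w S - w j * r j / (\<Sum>l\<in>S. w l * r l)\<bar> \<le> (R\<^sup>2 - 1) * (w j / sum w S)"
proof -
  define D T p q where "D = sum w S" and "T = (\<Sum>l\<in>S. w l * r l)"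
    and "p = w j / D" and "q = w j * r j / T"
  have "D / R = (\<Sum>l\<in>S. w l * (1 / R))"
    unfolding D_def by (simp add: sum_divide_distrib)
  also have "\<dots> \<le> T"
    unfolding T_def using w_nonneg r_between by (intro sum_mono mult_left_mono) auto
  finally have T_lower: "D / R \<le> T" .
  have T_upper: "T \<le> D * R"
    unfolding T_def D_def sum_distrib_right
    using w_nonneg r_between by (intro sum_mono mult_left_mono) auto
  have "0 < D / R" using assms unfolding D_def by simp
  then have T_pos: "0 < T" using T_lower by linarith
  have wj: "0 \<le> w j" "1 / R \<le> r j" "r j \<le> R" using assms by auto
  then have "1 / R \<le> R" by linarith
  then have R_sq: "1 \<le> R\<^sup>2"
    using \<open>0 < R\<close> by (simp add: field_simps power2_eq_square)
  have rj_pos: "0 < r j" using wj \<open>0 < R\<close> by (meson less_le_trans zero_less_divide_1_iff)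
  have p_nonneg: "0 \<le> p" unfolding p_def D_def using assms by simp
  have "q \<le> w j * R / (D / R)"
    unfolding q_def using wj T_lower \<open>0 < D / R\<close> \<open>0 < R\<close> by (intro frac_le mult_left_mono) auto
  also have "\<dots> = R\<^sup>2 * p"
    unfolding p_def using \<open>0 < R\<close> by (simp add: field_simps power2_eq_square)
  finally have q_upper: "q \<le> R\<^sup>2 * p" .
  have "p / R\<^sup>2 = w j * (1 / R) / (D * R)"
    unfolding p_def using \<open>0 < R\<close> by (simp add: field_simps power2_eq_square)
  also have "\<dots> \<le> q"
    unfolding q_def using wj rj_pos T_pos T_upper \<open>0 < R\<close>
    by (intro frac_le mult_left_mono mult_nonneg_nonneg) auto
  finally have q_lower: "p / R\<^sup>2 \<le> q" .
  show "p / R\<^sup>2 \<le> q" by (fact q_lower)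
  show "q \<le> R\<^sup>2 * p" by (fact q_upper)
  have "p - p / R\<^sup>2 \<le> (R\<^sup>2 - 1) * p"
  proof -
    have "p - p / R\<^sup>2 = (R\<^sup>2 - 1) * (p / R\<^sup>2)"
      using \<open>0 < R\<close> by (simp add: field_simps)
    also have "\<dots> \<le> (R\<^sup>2 - 1) * p"
      using R_sq p_nonneg by (intro mult_left_mono) (auto simp: divide_le_eq mult_le_cancel_left1)
    finally show ?thesis .
  qed
  then show "\<bar>p - q\<bar> \<le> (R\<^sup>2 - 1) * p"
    using q_upper q_lower by (simp add: abs_le_iff algebra_simps)
qed

lemma L0mat_common_factor:
  fixes W Wt :: "nat \<Rightarrow> nat \<Rightarrow> real" and r :: "nat \<Rightarrow> real"
  assumes "i \<noteq> j" "j < n" "0 < c"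
    and factor: "\<forall>l<n. l \<noteq> i \<longrightarrow> Wt i l = c * W i l * r l"
  shows "L0mat n Wt Gt i j = (W i j * r j / (\<Sum>l\<in>{..<n} - {i}. W i l * r l)) *\<^sub>R Gt i j"
proof -
  have "(\<Sum>l\<in>{..<n} - {i}. if i = l then 0 else Wt i l) = c * (\<Sum>l\<in>{..<n} - {i}. W i l * r l)"
    unfolding sum_distrib_left using factor by (intro sum.cong) auto
  then show ?thesis using assms by (simp add: L0mat_def Lmat_def)
qed

lemma frob_Lmat_minus_L0mat_le:
  fixes W Wt :: "nat \<Rightarrow> nat \<Rightarrow> real" and r :: "nat \<Rightarrow> real"
    and G Gt :: "nat \<Rightarrow> nat \<Rightarrow> real^'k^'k"
  assumes "i < n" "j < n" "0 < \<gamma>" "0 < R" "0 < c" "0 \<le> C" "0 \<le> t"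
    and W_unit: "\<forall>l<n. 0 \<le> W i l \<and> W i l \<le> 1"
    and row_sum: "real n * \<gamma> < (\<Sum>l\<in>{..<n} - {i}. W i l)"
    and factor: "\<forall>l<n. l \<noteq> i \<longrightarrow> Wt i l = c * W i l * r l \<and> 1 / R \<le> r l \<and> r l \<le> R"
    and G_le: "frob (G i j) \<le> C" and G_diff_le: "frob (Gt i j - G i j) \<le> t"
  shows "frob (Lmat n W G i j - L0mat n Wt Gt i j)
    \<le> (if i = j then C else (R\<^sup>2 - 1) * C + R\<^sup>2 * t) / (real n * \<gamma>)"
proof -
  define S where "S = {..<n} - {i}"
  define p where "p = W i j / sum (W i) S"
  have n\<gamma>_pos: "0 < real n * \<gamma>" using assms by simp
  have D_pos: "0 < sum (W i) S" using row_sum n\<gamma>_pos unfolding S_def by linarith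
  have p_nonneg: "0 \<le> p" unfolding p_def using W_unit \<open>j < n\<close> D_pos by simp
  have "p \<le> 1 / sum (W i) S"
    unfolding p_def using W_unit \<open>j < n\<close> D_pos by (simp add: divide_right_mono)
  also have "\<dots> \<le> 1 / (real n * \<gamma>)"
    using row_sum n\<gamma>_pos unfolding S_def by (simp add: frac_le)
  finally have p_le: "p \<le> 1 / (real n * \<gamma>)" .
  have L: "Lmat n W G i j = p *\<^sub>R G i j" unfolding Lmat_def p_def S_def ..
  show ?thesis
  proof (cases "i = j")
    case True
    then have "L0mat n Wt Gt i j = 0" by (simp add: L0mat_def Lmat_def)
    then have "frob (Lmat n W G i j - L0mat n Wt Gt i j) = p * norm (G i j)"
      using p_nonneg by (simp add: L frob_eq_norm)
    also have "\<dots> \<le> 1 / (real n * \<gamma>) * C"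
      using p_nonneg p_le G_le \<open>0 \<le> C\<close> n\<gamma>_pos by (intro mult_mono) (auto simp: frob_eq_norm)
    finally show ?thesis using True by simp
  next
    case False
    define K where "K = (R\<^sup>2 - 1) * C + R\<^sup>2 * t"
    define q where "q = W i j * r j / (\<Sum>l\<in>S. W i l * r l)"
    have j_in: "j \<in> S" using False \<open>j < n\<close> unfolding S_def by simp
    have r_between: "\<forall>l\<in>S. 1 / R \<le> r l \<and> r l \<le> R" using factor unfolding S_def by auto
    have "1 / R \<le> R" using r_between j_in by force
    then have "1 \<le> R\<^sup>2" using \<open>0 < R\<close> by (simp add: field_simps power2_eq_square)
    then have "0 \<le> K" using \<open>0 \<le> C\<close> \<open>0 \<le> t\<close> unfolding K_def by simp
    have perturb: "p / R\<^sup>2 \<le> q" "q \<le> R\<^sup>2 * p" "\<bar>p - q\<bar> \<le> (R\<^sup>2 - 1) * p"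
      using normalized_weight_perturbation[of S j R "W i" r] j_in r_between W_unit D_pos \<open>0 < R\<close>
      unfolding p_def q_def S_def by auto
    have L0: "L0mat n Wt Gt i j = q *\<^sub>R Gt i j"
      unfolding q_def S_def using False factor \<open>j < n\<close> \<open>0 < c\<close> by (intro L0mat_common_factor) auto
    have "0 \<le> p / R\<^sup>2" using p_nonneg by simp
    then have q_nonneg: "0 \<le> q" using perturb(1) by linarith
    have "Lmat n W G i j - L0mat n Wt Gt i j = (p - q) *\<^sub>R G i j - q *\<^sub>R (Gt i j - G i j)"
      unfolding L L0 by (simp add: algebra_simps)
    then have "frob (Lmat n W G i j - L0mat n Wt Gt i j)
        \<le> \<bar>p - q\<bar> * norm (G i j) + q * norm (Gt i j - G i j)"
      using norm_triangle_ineq4[of "(p - q) *\<^sub>R G i j" "q *\<^sub>R (Gt i j - G i j)"] q_nonneg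
      by (simp add: frob_eq_norm)
    also have "\<dots> \<le> (R\<^sup>2 - 1) * p * C + R\<^sup>2 * p * t"
      using perturb G_le G_diff_le q_nonneg \<open>0 \<le> t\<close>
      by (intro add_mono mult_mono) (auto simp: frob_eq_norm)
    also have "\<dots> = p * K" unfolding K_def by (simp add: algebra_simps)
    also have "\<dots> \<le> 1 / (real n * \<gamma>) * K"
      using p_le \<open>0 \<le> K\<close> by (rule mult_right_mono)
    finally show ?thesis using False unfolding K_def by simp
  qed
qed

lemma abs_op_norm_Lmat_minus_L0mat_le:
  fixes W Wt r :: "nat \<Rightarrow> nat \<Rightarrow> real" and G Gt :: "nat \<Rightarrow> nat \<Rightarrow> real^'k^'k"
  assumes "0 < n" "0 < \<gamma>" "0 < R" "0 < c" "0 \<le> C" "0 \<le> t"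
    and W_unit: "\<forall>i<n. \<forall>l<n. 0 \<le> W i l \<and> W i l \<le> 1"
    and row_sum: "\<forall>i<n. real n * \<gamma> < (\<Sum>l\<in>{..<n} - {i}. W i l)"
    and factor: "\<forall>i<n. \<forall>l<n. l \<noteq> i \<longrightarrow> Wt i l = c * W i l * r i l \<and> 1 / R \<le> r i l \<and> r i l \<le> R"
    and G_le: "\<forall>i<n. \<forall>j<n. frob (G i j) \<le> C \<and> frob (Gt i j - G i j) \<le> t"
  shows "\<bar>op_norm n (\<lambda>i j. Lmat n W G i j - L0mat n Wt Gt i j)\<bar>
    \<le> sqrt ((((R\<^sup>2 - 1) * C + R\<^sup>2 * t) / \<gamma>)\<^sup>2 + C\<^sup>2 / (real n * \<gamma>\<^sup>2))"
proof -
  define K where "K = (R\<^sup>2 - 1) * C + R\<^sup>2 * t"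
  have block: "(frob (Lmat n W G i j - L0mat n Wt Gt i j))\<^sup>2
      \<le> (K\<^sup>2 + (if i = j then C\<^sup>2 else 0)) / (real n * \<gamma>)\<^sup>2" if "i < n" "j < n" for i j
  proof -
    have "frob (Lmat n W G i j - L0mat n Wt Gt i j) \<le> (if i = j then C else K) / (real n * \<gamma>)"
      unfolding K_def
      by (rule frob_Lmat_minus_L0mat_le[where r = "r i" and c = c]) (use that assms in auto)
    then have "(frob (Lmat n W G i j - L0mat n Wt Gt i j))\<^sup>2 \<le> ((if i = j then C else K) / (real n * \<gamma>))\<^sup>2"
      by (intro power_mono) (simp_all add: frob_eq_norm)
    then show ?thesis
      by (cases "i = j") (auto simp: power_divide add_divide_distrib intro: add_increasing)
  qed
  have "\<bar>op_norm n (\<lambda>i j. Lmat n W G i j - L0mat n Wt Gt i j)\<bar>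
      \<le> sqrt (\<Sum>i<n. \<Sum>j<n. (frob (Lmat n W G i j - L0mat n Wt Gt i j))\<^sup>2)"
    by (rule abs_op_norm_le_hilbert_schmidt)
  also have "\<dots> \<le> sqrt (\<Sum>i<n. \<Sum>j<n. (K\<^sup>2 + (if i = j then C\<^sup>2 else 0)) / (real n * \<gamma>)\<^sup>2)"
    using block by (intro real_sqrt_le_mono sum_mono) auto
  also have "(\<Sum>i<n. \<Sum>j<n. (K\<^sup>2 + (if i = j then C\<^sup>2 else 0)) / (real n * \<gamma>)\<^sup>2)
      = (K / \<gamma>)\<^sup>2 + C\<^sup>2 / (real n * \<gamma>\<^sup>2)"
    using \<open>0 < n\<close> \<open>0 < \<gamma>\<close>
    by (simp add: sum_divide_distrib[symmetric] sum.distrib field_simps power2_eq_square)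
  finally show ?thesis unfolding K_def .
qed

lemma abs_op_norm_gaussian_L_diff_le:
  fixes dn dc :: "nat \<Rightarrow> nat \<Rightarrow> real" and G Gt :: "nat \<Rightarrow> nat \<Rightarrow> real^'k^'k"
  assumes "0 < \<nu>" "0 < n" "0 < \<gamma>" "0 \<le> C" "0 \<le> t"
    and sq_dist: "\<forall>i<n. \<forall>j<n. i \<noteq> j \<longrightarrow> \<bar>(dn i j)\<^sup>2 - (dc i j)\<^sup>2 - \<xi>\<bar> \<le> t"
    and G_le: "\<forall>i<n. \<forall>j<n. frob (G i j) \<le> C \<and> frob (Gt i j - G i j) \<le> t"
    and row_sum: "\<forall>i<n. (1 / real n) * (\<Sum>j\<in>{..<n} - {i}. exp (- (dc i j)\<^sup>2 / \<nu>)) > \<gamma>"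
  shows "\<bar>op_norm n (\<lambda>i j. Lmat n (\<lambda>i j. exp (- (dc i j)\<^sup>2 / \<nu>)) G i j
                       - L0mat n (\<lambda>i j. exp (- (dn i j)\<^sup>2 / \<nu>)) Gt i j)\<bar>
    \<le> sqrt (((((exp (t / \<nu>))\<^sup>2 - 1) * C + (exp (t / \<nu>))\<^sup>2 * t) / \<gamma>)\<^sup>2 + C\<^sup>2 / (real n * \<gamma>\<^sup>2))"
proof (rule abs_op_norm_Lmat_minus_L0mat_le
    [where c = "exp (- \<xi> / \<nu>)" and r = "\<lambda>i j. exp (- ((dn i j)\<^sup>2 - (dc i j)\<^sup>2 - \<xi>) / \<nu>)"])
  show "\<forall>i<n. \<forall>l<n. 0 \<le> exp (- (dc i l)\<^sup>2 / \<nu>) \<and> exp (- (dc i l)\<^sup>2 / \<nu>) \<le> 1"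
    using \<open>0 < \<nu>\<close> by (auto simp: divide_nonpos_pos)
  show "\<forall>i<n. real n * \<gamma> < (\<Sum>l\<in>{..<n} - {i}. exp (- (dc i l)\<^sup>2 / \<nu>))"
    using row_sum \<open>0 < n\<close> by (auto simp: field_simps)
  show "\<forall>i<n. \<forall>l<n. l \<noteq> i \<longrightarrow>
      exp (- (dn i l)\<^sup>2 / \<nu>)
        = exp (- \<xi> / \<nu>) * exp (- (dc i l)\<^sup>2 / \<nu>) * exp (- ((dn i l)\<^sup>2 - (dc i l)\<^sup>2 - \<xi>) / \<nu>)
      \<and> 1 / exp (t / \<nu>) \<le> exp (- ((dn i l)\<^sup>2 - (dc i l)\<^sup>2 - \<xi>) / \<nu>)
      \<and> exp (- ((dn i l)\<^sup>2 - (dc i l)\<^sup>2 - \<xi>) / \<nu>) \<le> exp (t / \<nu>)"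
  proof (intro allI impI conjI)
    fix i l assume "i < n" "l < n" "l \<noteq> i"
    then have e_le: "\<bar>(dn i l)\<^sup>2 - (dc i l)\<^sup>2 - \<xi>\<bar> \<le> t" using sq_dist by auto
    have e_lower: "- t / \<nu> \<le> - ((dn i l)\<^sup>2 - (dc i l)\<^sup>2 - \<xi>) / \<nu>"
      and e_upper: "- ((dn i l)\<^sup>2 - (dc i l)\<^sup>2 - \<xi>) / \<nu> \<le> t / \<nu>"
      using e_le \<open>0 < \<nu>\<close> by (intro divide_right_mono; linarith)+
    show "exp (- (dn i l)\<^sup>2 / \<nu>)
        = exp (- \<xi> / \<nu>) * exp (- (dc i l)\<^sup>2 / \<nu>) * exp (- ((dn i l)\<^sup>2 - (dc i l)\<^sup>2 - \<xi>) / \<nu>)"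
      unfolding mult_exp_exp by (simp add: diff_divide_distrib add_divide_distrib)
    show "1 / exp (t / \<nu>) \<le> exp (- ((dn i l)\<^sup>2 - (dc i l)\<^sup>2 - \<xi>) / \<nu>)"
      using e_lower by (simp add: exp_minus[symmetric] inverse_eq_divide[symmetric])
    show "exp (- ((dn i l)\<^sup>2 - (dc i l)\<^sup>2 - \<xi>) / \<nu>) \<le> exp (t / \<nu>)"
      using e_upper by simp
  qed
qed (use assms in auto)

lemma gaussian_bound_eventually_le:
  fixes \<nu> \<gamma> C \<epsilon> :: real
  assumes "0 < \<nu>" "0 < \<gamma>" "0 < \<epsilon>"
  shows "\<exists>t>0. eventually (\<lambda>n.
    sqrt (((((exp (t / \<nu>))\<^sup>2 - 1) * C + (exp (t / \<nu>))\<^sup>2 * t) / \<gamma>)\<^sup>2 + C\<^sup>2 / (real n * \<gamma>\<^sup>2)) \<le> \<epsilon>)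
    sequentially"
proof -
  let ?K = "\<lambda>t. ((((exp (t / \<nu>))\<^sup>2 - 1) * C + (exp (t / \<nu>))\<^sup>2 * t) / \<gamma>)\<^sup>2"
  have "(?K \<longlongrightarrow> ((((exp (0 / \<nu>))\<^sup>2 - 1) * C + (exp (0 / \<nu>))\<^sup>2 * 0) / \<gamma>)\<^sup>2) (at_right 0)"
    using assms by (intro tendsto_intros) auto
  then have "(?K \<longlongrightarrow> 0) (at_right 0)" by simp
  then have "eventually (\<lambda>t. ?K t < \<epsilon>\<^sup>2 / 2) (at_right 0)"
    by (rule order_tendstoD(2)) (use \<open>0 < \<epsilon>\<close> in simp)
  then obtain b where "0 < b" and b: "\<And>t. 0 < t \<Longrightarrow> t < b \<Longrightarrow> ?K t < \<epsilon>\<^sup>2 / 2"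
    unfolding eventually_at_right_field by auto
  have "((\<lambda>n. C\<^sup>2 / \<gamma>\<^sup>2 / real n) \<longlongrightarrow> 0) sequentially"
    by (intro tendsto_divide_0[OF tendsto_const] filterlim_at_top_imp_at_infinity
        filterlim_real_sequentially)
  then have "eventually (\<lambda>n. C\<^sup>2 / \<gamma>\<^sup>2 / real n < \<epsilon>\<^sup>2 / 2) sequentially"
    by (rule order_tendstoD(2)) (use \<open>0 < \<epsilon>\<close> in simp)
  then have "eventually (\<lambda>n. sqrt (?K (b / 2) + C\<^sup>2 / (real n * \<gamma>\<^sup>2)) \<le> \<epsilon>) sequentially"
  proof eventually_elim
    case (elim n)
    have "?K (b / 2) + C\<^sup>2 / (real n * \<gamma>\<^sup>2) \<le> \<epsilon>\<^sup>2"
      using b[of "b / 2"] \<open>0 < b\<close> elim by (simp add: mult.commute)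
    then show ?case using \<open>0 < \<epsilon>\<close> by (simp add: real_le_lsqrt)
  qed
  then show ?thesis using \<open>0 < b\<close> by (intro exI[of _ "b / 2"]) auto
qed

lemma oP1_if_controlled:
  assumes "oP1 M E" "oP1 M F"
    and control: "\<And>\<epsilon>. 0 < \<epsilon> \<Longrightarrow> \<exists>t>0. eventually (\<lambda>n. \<forall>\<omega>\<in>space M.
      \<bar>E n \<omega>\<bar> \<le> t \<longrightarrow> \<bar>F n \<omega>\<bar> \<le> t \<longrightarrow> \<bar>X n \<omega>\<bar> \<le> \<epsilon>) sequentially"
  shows "oP1 M X"
  unfolding oP1_def
proof (intro allI impI)
  fix \<epsilon> \<delta> :: real assume "0 < \<epsilon>" "0 < \<delta>"
  obtain t where "0 < t" and controlled: "eventually (\<lambda>n. \<forall>\<omega>\<in>space M.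
      \<bar>E n \<omega>\<bar> \<le> t \<longrightarrow> \<bar>F n \<omega>\<bar> \<le> t \<longrightarrow> \<bar>X n \<omega>\<bar> \<le> \<epsilon>) sequentially"
    using control[OF \<open>0 < \<epsilon>\<close>] by blast
  have "0 < \<delta> / 2" using \<open>0 < \<delta>\<close> by simp
  then have "eventually (\<lambda>n. \<exists>A\<in>sets M. measure M A < \<delta> / 2 \<and> {\<omega>\<in>space M. t < \<bar>E n \<omega>\<bar>} \<subseteq> A) sequentially"
    and "eventually (\<lambda>n. \<exists>A\<in>sets M. measure M A < \<delta> / 2 \<and> {\<omega>\<in>space M. t < \<bar>F n \<omega>\<bar>} \<subseteq> A) sequentially"
    using assms(1,2) \<open>0 < t\<close> unfolding oP1_def by blast+
  then show "eventually (\<lambda>n. \<exists>A\<in>sets M. measure M A < \<delta> \<and> {\<omega>\<in>space M. \<epsilon> < \<bar>X n \<omega>\<bar>} \<subseteq> A) sequentially"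
    using controlled
  proof eventually_elim
    case (elim n)
    then obtain A B where "A \<in> sets M" "B \<in> sets M" "measure M A < \<delta> / 2" "measure M B < \<delta> / 2"
      and "{\<omega>\<in>space M. t < \<bar>E n \<omega>\<bar>} \<subseteq> A" "{\<omega>\<in>space M. t < \<bar>F n \<omega>\<bar>} \<subseteq> B"
      by blast
    moreover from this have "{\<omega>\<in>space M. \<epsilon> < \<bar>X n \<omega>\<bar>} \<subseteq> A \<union> B"
      using elim(3) by force
    moreover have "measure M (A \<union> B) \<le> measure M A + measure M B"
      using \<open>A \<in> sets M\<close> \<open>B \<in> sets M\<close> by (rule measure_Un_le)
    ultimately show ?case by (intro bexI[of _ "A \<union> B"]) auto
  qed
qed

lemma le_if_abs_SUP_le:
  fixes f :: "'b \<Rightarrow> real"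
  assumes "finite S" "x \<in> S" "\<bar>SUP y\<in>S. f y\<bar> \<le> t"
  shows "f x \<le> t"
  using cSUP_upper[of x S f] assms by (simp add: bdd_above_finite)

theorem proposition2p4:
  fixes M :: "'a measure"
    and d_noisy d_clean :: "nat \<Rightarrow> 'a \<Rightarrow> nat \<Rightarrow> nat \<Rightarrow> real"
    and \<xi> :: "nat \<Rightarrow> real"
    and \<nu> :: real
    and G Gt :: "nat \<Rightarrow> 'a \<Rightarrow> nat \<Rightarrow> nat \<Rightarrow> real^'k^'k"
  assumes "prob_space M"
    and "\<nu> > 0"
    and "\<And>n \<omega> i j. d_noisy n \<omega> i j \<ge> 0"
    and "\<And>n \<omega> i j. d_clean n \<omega> i j \<ge> 0"
    and "oP1 M (\<lambda>n \<omega>. SUP p\<in>{(i, j). i < n \<and> j < n \<and> i \<noteq> j}.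
           \<bar>(d_noisy n \<omega> (fst p) (snd p))\<^sup>2 - (d_clean n \<omega> (fst p) (snd p))\<^sup>2 - \<xi> n\<bar>)"
    and "\<exists>C>0. \<forall>n. \<forall>\<omega>\<in>space M. \<forall>i<n. \<forall>j<n.
           frob (G n \<omega> i j) \<le> C \<and> frob (Gt n \<omega> i j) \<le> C"
    and "oP1 M (\<lambda>n \<omega>. SUP p\<in>{(i, j). i < n \<and> j < n}.
           frob (Gt n \<omega> (fst p) (snd p) - G n \<omega> (fst p) (snd p)))"
    and "\<exists>\<gamma>>0. eventually (\<lambda>n. \<forall>\<omega>\<in>space M. \<forall>i<n.
           (1 / real n) * (\<Sum>j\<in>{..<n} - {i}. exp (- (d_clean n \<omega> i j)\<^sup>2 / \<nu>)) > \<gamma>) sequentially"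
  shows "oP1 M (\<lambda>n \<omega>. op_norm n (\<lambda>i j.
           Lmat n (\<lambda>i j. exp (- (d_clean n \<omega> i j)\<^sup>2 / \<nu>)) (G n \<omega>) i j
         - L0mat n (\<lambda>i j. exp (- (d_noisy n \<omega> i j)\<^sup>2 / \<nu>)) (Gt n \<omega>) i j))"
proof (rule oP1_if_controlled[OF assms(5,7)], goal_cases)
  case (1 \<epsilon>)
  obtain C where "0 < C" and G_le: "\<forall>n. \<forall>\<omega>\<in>space M. \<forall>i<n. \<forall>j<n. frob (G n \<omega> i j) \<le> C"
    using assms(6) by blast
  obtain \<gamma> where "0 < \<gamma>" and row_sum: "eventually (\<lambda>n. \<forall>\<omega>\<in>space M. \<forall>i<n.
      (1 / real n) * (\<Sum>j\<in>{..<n} - {i}. exp (- (d_clean n \<omega> i j)\<^sup>2 / \<nu>)) > \<gamma>) sequentially"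
    using assms(8) by blast
  obtain t where "0 < t" and bound_le: "eventually (\<lambda>n. sqrt (((((exp (t / \<nu>))\<^sup>2 - 1) * C
      + (exp (t / \<nu>))\<^sup>2 * t) / \<gamma>)\<^sup>2 + C\<^sup>2 / (real n * \<gamma>\<^sup>2)) \<le> \<epsilon>) sequentially"
    using gaussian_bound_eventually_le[OF \<open>0 < \<nu>\<close> \<open>0 < \<gamma>\<close> \<open>0 < \<epsilon>\<close>] by blast
  show ?case
  proof (intro exI[of _ t] conjI \<open>0 < t\<close>, goal_cases)
    case 1
    show ?case using bound_le row_sum eventually_gt_at_top[of 0]
    proof eventually_elim
      case (elim n)
      have finite_pairs: "finite {(i, j). i < n \<and> j < n \<and> i \<noteq> j}" "finite {(i, j). i < n \<and> j < n}"
        by (auto intro: finite_subset[of _ "{..<n} \<times> {..<n}"])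
      show ?case
      proof (intro ballI impI, goal_cases)
        case (1 \<omega>)
        have sq_dist: "\<forall>i<n. \<forall>j<n. i \<noteq> j \<longrightarrow> \<bar>(d_noisy n \<omega> i j)\<^sup>2 - (d_clean n \<omega> i j)\<^sup>2 - \<xi> n\<bar> \<le> t"
          using le_if_abs_SUP_le[OF finite_pairs(1) _ 1(2)] by fastforce
        have G_diff_le: "\<forall>i<n. \<forall>j<n. frob (G n \<omega> i j) \<le> C \<and> frob (Gt n \<omega> i j - G n \<omega> i j) \<le> t"
          using le_if_abs_SUP_le[OF finite_pairs(2) _ 1(3)] G_le 1(1) by fastforce
        show ?case
          by (rule order_trans[OF abs_op_norm_gaussian_L_diff_le[where \<gamma> = \<gamma> and C = C and t = t] elim(1)])
            (use sq_dist G_diff_le elim 1(1) \<open>0 < \<nu>\<close> \<open>0 < \<gamma>\<close> \<open>0 < C\<close> \<open>0 < t\<close> in auto)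
      qed
    qed
  qed
qed

end
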